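(* Let $N\ge1$. Let $f_{\mathrm{prod}}:\mathbb{N}^N\to\mathbb{N}$ be $f_{\mathrm{prod}}(\mathbf{s})=s_1s_2\cdots s_N$, and let $g:\mathbb{N}^N\to\mathbb{N}$ be the indicator function of $\{1,2\}^N=\{(s_1,\dots,s_N): s_i\in\{1,2\}\}$. Then for every integer $\ell>0$, $$c_{f_{\mathrm{prod}}}(\ell\mathbf{1})=c_g((2\ell-1)\mathbf{1}),$$ where $\mathbf{1}=(1,\dots,1)\in\mathbb{N}^N$.
   Context: $\mathbb{N}=\{0,1,2,\dots\}$. For $h:\mathbb{N}^N\to\mathbb{N}$ with $h(\mathbf{0})=0$, $k\ge0$ and $\mathbf{x}\in\mathbb{N}^N$, $\binom{k}{\mathbf{x}}_h=\sum_{\mathbf{m}_1+\cdots+\mathbf{m}_k=\mathbf{x}} h(\mathbf{m}_1)\cdots h(\mathbf{m}_k)$ over tuples of vectors in $\mathbb{N}^N$, and $c_h(\mathbf{x})=\sum_{k\ge0}\binom{k}{\mathbf{x}}_h$ (the number of $h$-weighted vector compositions of $\mathbf{x}$, where a part $\mathbf{m}$ can take one of $h(\mathbf{m})$ colors). *)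

theory Defs
  imports "HOL-Analysis.Analysis"
begin

text \<open>Vectors in \<open>\<nat>^N\<close> are represented as functions \<open>nat \<Rightarrow> nat\<close> with coordinates
  \<open>0..N-1\<close>, vanishing at all indices \<open>\<ge> N\<close>.\<close>

definition vecs :: "nat \<Rightarrow> (nat \<Rightarrow> nat) set" where
  "vecs N = {v. \<forall>i\<ge>N. v i = 0}"

definition binom_h :: "nat \<Rightarrow> ((nat \<Rightarrow> nat) \<Rightarrow> nat) \<Rightarrow> nat \<Rightarrow> (nat \<Rightarrow> nat) \<Rightarrow> nat" where
  "binom_h N h k x =
     (\<Sum>ms \<in> {ms. length ms = k \<and> set ms \<subseteq> vecs N \<and> (\<forall>i. (\<Sum>m\<leftarrow>ms. m i) = x i)}.
        (\<Prod>m\<leftarrow>ms. h m))"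

definition comp_count :: "nat \<Rightarrow> ((nat \<Rightarrow> nat) \<Rightarrow> nat) \<Rightarrow> (nat \<Rightarrow> nat) \<Rightarrow> nat" where
  "comp_count N h x = (\<Sum>\<^sub>\<infinity>k. binom_h N h k x)"

definition f_prod :: "nat \<Rightarrow> (nat \<Rightarrow> nat) \<Rightarrow> nat" where
  "f_prod N s = (\<Prod>i<N. s i)"

definition g12 :: "nat \<Rightarrow> (nat \<Rightarrow> nat) \<Rightarrow> nat" where
  "g12 N s = (if \<forall>i<N. s i \<in> {1, 2} then 1 else 0)"

definition constvec :: "nat \<Rightarrow> nat \<Rightarrow> (nat \<Rightarrow> nat)" where
  "constvec N a = (\<lambda>i. if i < N then a else 0)"

end

theory Submission
  imports Defs "HOL-Library.FuncSet"
begin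

text \<open>When the colouring is multiplicative, \<open>h m = \<Prod>i<N. \<phi> (m i)\<close>, a composition of a vector
  into \<open>k\<close> parts is the same as an independent choice of a one-dimensional \<open>\<phi>\<close>-weighted
  composition into \<open>k\<close> parts in every coordinate, so \<open>binom_h N h k x\<close> factors over the coordinates.
  Both \<open>f_prod\<close> and \<open>g\<close> are multiplicative, with \<open>\<phi> j = j\<close> and \<open>\<phi> = [j \<in> {1,2}]\<close>.
  In one dimension the \<open>j\<close>-weighted compositions of \<open>n\<close> into \<open>k + 1\<close> parts number
  \<open>(n + k choose 2k + 1)\<close>, and the compositions of \<open>n\<close> into \<open>k\<close> parts of size 1 or 2 number
  \<open>(k choose n - k)\<close>. Hence both sides equal \<open>\<Sum>k<l. (l + k choose 2k + 1)^N\<close>, the two sums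
  matching term by term through the symmetry of binomial coefficients.\<close>

definition comp_lists :: "nat \<Rightarrow> nat \<Rightarrow> (nat \<Rightarrow> nat) \<Rightarrow> (nat \<Rightarrow> nat) list set" where
  "comp_lists N k x = {ms. length ms = k \<and> set ms \<subseteq> vecs N \<and> (\<forall>i. (\<Sum>m\<leftarrow>ms. m i) = x i)}"

definition vecs_below :: "nat \<Rightarrow> (nat \<Rightarrow> nat) \<Rightarrow> (nat \<Rightarrow> nat) set" where
  "vecs_below N x = {m \<in> vecs N. \<forall>i. m i \<le> x i}"

fun weighted_comps :: "(nat \<Rightarrow> nat) \<Rightarrow> nat \<Rightarrow> nat \<Rightarrow> nat" where
  "weighted_comps \<phi> 0 n = (if n = 0 then 1 else 0)"
| "weighted_comps \<phi> (Suc k) n = (\<Sum>j\<le>n. \<phi> j * weighted_comps \<phi> k (n - j))"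

lemma binom_h_eq_sum_comp_lists: "binom_h N h k x = (\<Sum>ms\<in>comp_lists N k x. \<Prod>m\<leftarrow>ms. h m)"
  unfolding binom_h_def comp_lists_def by simp

lemma constvec_in_vecs: "constvec N a \<in> vecs N"
  by (simp add: vecs_def constvec_def)

lemma vecs_below_eq_image_PiE:
  assumes "x \<in> vecs N"
  shows "vecs_below N x = (\<lambda>p i. if i < N then p i else 0) ` PiE {..<N} (\<lambda>i. {..x i})"
proof (intro equalityI subsetI)
  fix m assume m: "m \<in> vecs_below N x"
  hence "m = (\<lambda>i. if i < N then restrict m {..<N} i else 0)"
    by (auto simp: vecs_below_def vecs_def)
  moreover have "restrict m {..<N} \<in> PiE {..<N} (\<lambda>i. {..x i})"
    using m by (auto simp: vecs_below_def)
  ultimately show "m \<in> (\<lambda>p i. if i < N then p i else 0) ` PiE {..<N} (\<lambda>i. {..x i})"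
    by blast
qed (use assms in \<open>auto simp: vecs_below_def vecs_def\<close>)

lemma inj_on_zero_extension_PiE:
  "inj_on (\<lambda>p i. if i < N then p i else (0::nat)) (PiE {..<N} A)"
proof (rule inj_onI)
  fix p q assume p: "p \<in> PiE {..<N} A" and q: "q \<in> PiE {..<N} A"
    and eq: "(\<lambda>i. if i < N then p i else 0) = (\<lambda>i. if i < N then q i else 0)"
  show "p = q"
  proof
    fix i show "p i = q i"
      using p q fun_cong[OF eq, of i] by (cases "i < N") (auto simp: PiE_def extensional_def)
  qed
qed

lemma finite_vecs_below: "x \<in> vecs N \<Longrightarrow> finite (vecs_below N x)"
  by (simp add: vecs_below_eq_image_PiE finite_PiE)

lemma comp_lists_subset: "comp_lists N k x \<subseteq> {ms. set ms \<subseteq> vecs_below N x \<and> length ms = k}"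
proof
  fix ms assume ms: "ms \<in> comp_lists N k x"
  have "m i \<le> x i" if "m \<in> set ms" for m i
  proof -
    have "m i \<le> (\<Sum>m\<leftarrow>ms. m i)" by (rule member_le_sum_list) (use that in auto)
    thus ?thesis using ms by (simp add: comp_lists_def)
  qed
  thus "ms \<in> {ms. set ms \<subseteq> vecs_below N x \<and> length ms = k}"
    using ms by (auto simp: comp_lists_def vecs_below_def)
qed

lemma finite_comp_lists: "x \<in> vecs N \<Longrightarrow> finite (comp_lists N k x)"
  by (rule finite_subset[OF comp_lists_subset finite_lists_length_eq[OF finite_vecs_below]])

lemma comp_lists_0:
  assumes "x \<in> vecs N"
  shows "comp_lists N 0 x = (if \<forall>i<N. x i = 0 then {[]} else {})"
  using assms by (auto simp: comp_lists_def vecs_def) (metis not_le)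

lemma comp_lists_Suc:
  "comp_lists N (Suc k) x =
     (\<lambda>(m, ms). m # ms) ` (SIGMA m:vecs_below N x. comp_lists N k (\<lambda>i. x i - m i))"
proof (intro equalityI subsetI)
  fix ms assume ms: "ms \<in> comp_lists N (Suc k) x"
  then obtain m ms' where ms_eq: "ms = m # ms'" by (cases ms) (auto simp: comp_lists_def)
  have sum_eq: "m i + (\<Sum>m\<leftarrow>ms'. m i) = x i" for i using ms ms_eq by (auto simp: comp_lists_def)
  have "m \<in> vecs_below N x"
    using ms ms_eq sum_eq by (auto simp: comp_lists_def vecs_below_def) (metis le_add1)
  moreover have "ms' \<in> comp_lists N k (\<lambda>i. x i - m i)"
    using ms ms_eq sum_eq by (auto simp: comp_lists_def) (metis add_diff_cancel_left')
  ultimately show "ms \<in> (\<lambda>(m, ms). m # ms) ` (SIGMA m:vecs_below N x. comp_lists N k (\<lambda>i. x i - m i))"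
    using ms_eq by auto
qed (auto simp: comp_lists_def vecs_below_def)

lemma binom_h_multiplicative:
  assumes "x \<in> vecs N"
  shows "binom_h N (\<lambda>m. \<Prod>i<N. \<phi> (m i)) k x = (\<Prod>i<N. weighted_comps \<phi> k (x i))"
  using assms
proof (induction k arbitrary: x)
  case 0
  then show ?case by (auto simp: binom_h_eq_sum_comp_lists comp_lists_0)
next
  case (Suc k)
  let ?h = "\<lambda>m. \<Prod>i<N. \<phi> (m i)"
  have rest: "(\<lambda>i. x i - m i) \<in> vecs N" for m using Suc.prems by (simp add: vecs_def)
  have "binom_h N ?h (Suc k) x
      = (\<Sum>(m, ms)\<in>(SIGMA m:vecs_below N x. comp_lists N k (\<lambda>i. x i - m i)). ?h m * prod_list (map ?h ms))"
    unfolding binom_h_eq_sum_comp_lists comp_lists_Suc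
    by (subst sum.reindex) (auto simp: inj_on_def case_prod_beta)
  also have "\<dots> = (\<Sum>m\<in>vecs_below N x. ?h m * binom_h N ?h k (\<lambda>i. x i - m i))"
    by (subst sum.Sigma[symmetric])
      (auto simp: finite_vecs_below[OF Suc.prems] finite_comp_lists[OF rest]
        binom_h_eq_sum_comp_lists sum_distrib_left)
  also have "\<dots> = (\<Sum>m\<in>vecs_below N x. \<Prod>i<N. \<phi> (m i) * weighted_comps \<phi> k (x i - m i))"
    by (simp add: Suc.IH[OF rest] prod.distrib)
  also have "\<dots> = (\<Sum>p\<in>PiE {..<N} (\<lambda>i. {..x i}). \<Prod>i<N. \<phi> (p i) * weighted_comps \<phi> k (x i - p i))"
    by (simp add: vecs_below_eq_image_PiE[OF Suc.prems] sum.reindex[OF inj_on_zero_extension_PiE])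
  also have "\<dots> = (\<Prod>i<N. \<Sum>j\<le>x i. \<phi> j * weighted_comps \<phi> k (x i - j))"
    by (rule prod_sum_PiE[symmetric]) auto
  finally show ?case by simp
qed

lemma infsum_eq_sum_if_zero_outside:
  fixes f :: "'a \<Rightarrow> 'b::{comm_monoid_add, t2_space}"
  assumes "finite F" "\<And>k. k \<notin> F \<Longrightarrow> f k = 0"
  shows "infsum f UNIV = sum f F"
proof -
  have "infsum f UNIV = infsum f F"
    by (rule infsum_cong_neutral) (use assms in auto)
  then show ?thesis using assms(1) by simp
qed

lemma comp_count_multiplicative_constvec:
  "comp_count N (\<lambda>m. \<Prod>i<N. \<phi> (m i)) (constvec N a) = (\<Sum>\<^sub>\<infinity>k. weighted_comps \<phi> k a ^ N)"
proof -
  have "binom_h N (\<lambda>m. \<Prod>i<N. \<phi> (m i)) k (constvec N a) = weighted_comps \<phi> k a ^ N" for k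
  proof -
    have "(\<Prod>i<N. weighted_comps \<phi> k (constvec N a i)) = weighted_comps \<phi> k a ^ N"
      by (simp add: constvec_def)
    then show ?thesis by (simp add: binom_h_multiplicative[OF constvec_in_vecs])
  qed
  then show ?thesis by (simp add: comp_count_def)
qed

lemma sum_choose_shifted:
  assumes "k \<le> m"
  shows "(\<Sum>j\<le>n. (j + k) choose m) = (n + k + 1) choose (m + 1)"
proof (induction n)
  case 0 then show ?case using assms by (simp add: binomial_eq_0)
next
  case (Suc n)
  then show ?case using binomial_Suc_Suc[of "n + k + 1" m] by simp
qed

lemma sum_diff_mult_choose_shifted:
  assumes "k \<le> m"
  shows "(\<Sum>j\<le>n. (n - j) * ((j + k) choose m)) = (n + k + 1) choose (m + 2)"
proof (induction n)
  case 0 then show ?case using assms by (simp add: binomial_eq_0)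
next
  case (Suc n)
  have "(\<Sum>j\<le>Suc n. (Suc n - j) * ((j + k) choose m))
      = (\<Sum>j\<le>n. (n - j) * ((j + k) choose m) + ((j + k) choose m))"
    by (simp, rule sum.cong) (auto simp: Suc_diff_le)
  also have "\<dots> = ((n + k + 1) choose (m + 2)) + ((n + k + 1) choose (m + 1))"
    by (simp only: sum.distrib Suc sum_choose_shifted[OF assms])
  also have "\<dots> = (Suc n + k + 1) choose (m + 2)"
    using binomial_Suc_Suc[of "n + k + 1" "m + 1"] by simp
  finally show ?case .
qed

lemma weighted_comps_id: "weighted_comps (\<lambda>j. j) (Suc k) n = (n + k) choose (2 * k + 1)"
proof (induction k arbitrary: n)
  case 0
  have "(\<Sum>j\<le>n. j * (if n - j = 0 then 1 else 0)) = (\<Sum>j\<in>{n}. j)"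
    by (rule sum.mono_neutral_cong_right) auto
  then show ?case by simp
next
  case (Suc k)
  have "weighted_comps (\<lambda>j. j) (Suc (Suc k)) n = (\<Sum>j\<le>n. j * ((n - j + k) choose (2 * k + 1)))"
    by (subst weighted_comps.simps(2), rule sum.cong) (auto simp: Suc simp del: weighted_comps.simps)
  also have "\<dots> = (\<Sum>j\<le>n. (n - j) * ((j + k) choose (2 * k + 1)))"
    by (rule sum.reindex_bij_witness[where i="\<lambda>j. n - j" and j="\<lambda>j. n - j"]) auto
  also have "\<dots> = (n + Suc k) choose (2 * Suc k + 1)"
    using sum_diff_mult_choose_shifted[of k "2 * k + 1" n] by simp
  finally show ?case .
qed

definition indicator12 :: "nat \<Rightarrow> nat" where
  "indicator12 j = (if j \<in> {1, 2} then 1 else 0)"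

lemma sum_indicator12_mult:
  "(\<Sum>j\<le>n. indicator12 j * g (n - j)) =
     (if 1 \<le> n then g (n - 1) else 0) + (if 2 \<le> n then g (n - 2) else 0)"
proof -
  have "(\<Sum>j\<le>n. indicator12 j * g (n - j)) = (\<Sum>j\<le>n. if j \<in> {1, 2} then g (n - j) else 0)"
    by (rule sum.cong) (auto simp: indicator12_def)
  also have "\<dots> = (\<Sum>j\<in>{..n} \<inter> {1, 2}. g (n - j))"
    by (rule sum.inter_restrict[symmetric]) simp
  also have "{..n} \<inter> {1, 2} = (if n = 0 then {} else if n = 1 then {1} else {1, 2})"
    by auto
  finally show ?thesis by auto
qed

lemma weighted_comps_indicator12:
  "weighted_comps indicator12 k n = (if k \<le> n then k choose (n - k) else 0)"
proof (induction k arbitrary: n)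
  case 0 then show ?case by simp
next
  case (Suc k)
  have rec: "weighted_comps indicator12 (Suc k) n =
      (if 1 \<le> n then weighted_comps indicator12 k (n - 1) else 0) +
      (if 2 \<le> n then weighted_comps indicator12 k (n - 2) else 0)"
    by (subst weighted_comps.simps(2), rule sum_indicator12_mult)
  consider "n < Suc k" | "n = Suc k" | d where "n = Suc (Suc (k + d))"
  proof (cases "Suc k < n")
    case True
    then obtain d where "n = Suc (Suc k + d)" using less_imp_Suc_add by blast
    then show ?thesis using that(3) by simp
  qed (use that in linarith)
  then show ?case
  proof cases
    case 1
    show ?thesis unfolding rec using 1 by (simp add: Suc.IH del: weighted_comps.simps) linarith
  next
    case 2
    show ?thesis unfolding rec using 2 by (simp add: Suc.IH del: weighted_comps.simps) linarith
  next
    case (3 d)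
    show ?thesis unfolding rec using 3 by (simp add: Suc.IH Suc_diff_le del: weighted_comps.simps)
  qed
qed

lemma comp_count_f_prod_constvec:
  assumes "N > 0" "l > 0"
  shows "comp_count N (f_prod N) (constvec N l) = (\<Sum>k<l. ((l + k) choose (2 * k + 1)) ^ N)"
proof -
  have "comp_count N (f_prod N) (constvec N l) = (\<Sum>\<^sub>\<infinity>k. weighted_comps (\<lambda>j. j) k l ^ N)"
    unfolding f_prod_def by (rule comp_count_multiplicative_constvec[of N "\<lambda>j. j"])
  also have "\<dots> = (\<Sum>k\<in>Suc ` {..<l}. weighted_comps (\<lambda>j. j) k l ^ N)"
  proof (rule infsum_eq_sum_if_zero_outside)
    fix k assume "k \<notin> Suc ` {..<l}"
    then have "k = 0 \<or> (\<exists>k'. k = Suc k' \<and> l \<le> k')" by (cases k) auto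
    then show "weighted_comps (\<lambda>j. j) k l ^ N = 0"
      using assms by (auto simp: weighted_comps_id binomial_eq_0 simp del: weighted_comps.simps(2))
  qed simp
  also have "\<dots> = (\<Sum>k<l. ((l + k) choose (2 * k + 1)) ^ N)"
    by (simp add: sum.reindex weighted_comps_id add.commute del: weighted_comps.simps)
  finally show ?thesis .
qed

lemma comp_count_g12_constvec:
  assumes "N > 0" "l > 0"
  shows "comp_count N (g12 N) (constvec N (2 * l - 1)) = (\<Sum>k<l. ((k + l) choose (l - 1 - k)) ^ N)"
proof -
  have "g12 N = (\<lambda>m. \<Prod>i<N. indicator12 (m i))"
    by (auto simp: fun_eq_iff g12_def indicator12_def)
  then have "comp_count N (g12 N) (constvec N (2 * l - 1))
      = (\<Sum>\<^sub>\<infinity>k. weighted_comps indicator12 k (2 * l - 1) ^ N)"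
    by (simp only: comp_count_multiplicative_constvec)
  also have "\<dots> = (\<Sum>k\<in>(\<lambda>k. k + l) ` {..<l}. weighted_comps indicator12 k (2 * l - 1) ^ N)"
  proof (rule infsum_eq_sum_if_zero_outside)
    fix k assume k: "k \<notin> (\<lambda>k. k + l) ` {..<l}"
    have "k < l \<or> 2 * l \<le> k"
    proof (rule ccontr)
      assume "\<not> (k < l \<or> 2 * l \<le> k)"
      then have "k - l \<in> {..<l}" "k = (k - l) + l" by auto
      then show False using k by blast
    qed
    then show "weighted_comps indicator12 k (2 * l - 1) ^ N = 0"
      using assms by (auto simp: weighted_comps_indicator12 binomial_eq_0)
  qed simp
  also have "\<dots> = (\<Sum>k<l. ((k + l) choose (l - 1 - k)) ^ N)"
    by (simp add: sum.reindex weighted_comps_indicator12) (rule sum.cong, auto)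
  finally show ?thesis .
qed

theorem theorem16:
  fixes N l :: nat
  assumes "N \<ge> 1" and "l > 0"
  shows "comp_count N (f_prod N) (constvec N l) = comp_count N (g12 N) (constvec N (2 * l - 1))"
proof -
  have N: "N > 0" using assms(1) by simp
  have "comp_count N (f_prod N) (constvec N l) = (\<Sum>k<l. ((l + k) choose (2 * k + 1)) ^ N)"
    by (rule comp_count_f_prod_constvec[OF N assms(2)])
  also have "\<dots> = (\<Sum>k<l. ((k + l) choose (l - 1 - k)) ^ N)"
  proof (rule sum.cong)
    fix k assume "k \<in> {..<l}"
    then have "(l + k) choose (2 * k + 1) = (l + k) choose (l + k - (2 * k + 1))"
      by (intro binomial_symmetric) simp
    then show "((l + k) choose (2 * k + 1)) ^ N = ((k + l) choose (l - 1 - k)) ^ N"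
      by (simp add: add.commute)
  qed simp
  also have "\<dots> = comp_count N (g12 N) (constvec N (2 * l - 1))"
    by (rule comp_count_g12_constvec[OF N assms(2), symmetric])
  finally show ?thesis .
qed

end
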